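(* In the directed polymer on a disordered $d$-ary tree with non-disordered defect subtree described in the context, for every $\beta>0$ and every $u\in\mathbb{R}$, \[\limsup_{n\to\infty}\frac1n\log Z^{ST}_n(\beta,u)\leq\max\{\lambda(\beta)+\log d,\ \beta u+\log d_1\}\quad\text{a.s.}\]
   Context: Let $d\geq2$, $1\leq d_1<d$. $\mathbb{T}$ is the rooted $d$-ary tree with nodes $(k,j)$ ($k$ the generation, root $\mathbf 0=(0,1)$, children of $(k,j)$ are $(k+1,(j-1)d+\ell)$, $1\le\ell\le d$). $\tilde{\mathbb{T}}$ is the left-most $d_1$-regular subtree: it contains the root and, for $x=(k,j)\in\tilde{\mathbb{T}}$, the children $(k+1,d(j-1)+\ell)$, $1\le\ell\le d_1$. Let $V$ be a non-degenerate real random variable with $\lambda(\beta):=\log\mathbf{E}[e^{\beta V}]<\infty$ for all real $\beta$. Set $V(x)=u$ for $x\in\tilde{\mathbb{T}}$ and let $V(x)$, $x\in\mathbb{T}\setminus\tilde{\mathbb{T}}$, be i.i.d. copies of $V$. $Z^{ST}_n(\beta,u)=\sum_W\exp(\beta\sum_{y\in W\setminus\{\mathbf 0\}}V(y))$ over all directed paths $W$ from $\mathbf 0$ to generation $n$. *)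

theory Defs
  imports "HOL-Probability.Probability"
begin

text \<open>Nodes of the rooted d-ary tree: (k, j) with generation k and 1 \<le> j \<le> d^k.\<close>
type_synonym node = "nat \<times> nat"

definition tree_nodes :: "nat \<Rightarrow> node set" where
  "tree_nodes d = {(k, j). 1 \<le> j \<and> j \<le> d ^ k}"

definition root :: node where
  "root = (0, 1)"

definition is_child :: "nat \<Rightarrow> node \<Rightarrow> node \<Rightarrow> bool" where
  "is_child d x y \<longleftrightarrow> (\<exists>l. 1 \<le> l \<and> l \<le> d \<and> y = (Suc (fst x), (snd x - 1) * d + l))"

inductive_set defect_subtree :: "nat \<Rightarrow> nat \<Rightarrow> node set" for d d1 where
  root_in: "root \<in> defect_subtree d d1"
| child_in: "\<lbrakk>(k, j) \<in> defect_subtree d d1; 1 \<le> l; l \<le> d1\<rbrakk>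
              \<Longrightarrow> (Suc k, d * (j - 1) + l) \<in> defect_subtree d d1"

definition paths :: "nat \<Rightarrow> nat \<Rightarrow> node list set" where
  "paths d n = {ws. length ws = Suc n \<and> ws ! 0 = root \<and>
                    (\<forall>i<n. is_child d (ws ! i) (ws ! Suc i))}"

definition env_ST :: "nat \<Rightarrow> nat \<Rightarrow> real \<Rightarrow> (node \<Rightarrow> 'a \<Rightarrow> real) \<Rightarrow> node \<Rightarrow> 'a \<Rightarrow> real" where
  "env_ST d d1 u V x \<omega> = (if x \<in> defect_subtree d d1 then u else V x \<omega>)"

text \<open>Partition function Z^{ST}_n(beta,u); the root (index 0) is excluded from the energy.\<close>
definition Z_ST :: "nat \<Rightarrow> nat \<Rightarrow> (node \<Rightarrow> 'a \<Rightarrow> real) \<Rightarrow> nat \<Rightarrow> real \<Rightarrow> real \<Rightarrow> 'a \<Rightarrow> real" where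
  "Z_ST d d1 V n \<beta> u \<omega> =
     (\<Sum>ws\<in>paths d n. exp (\<beta> * (\<Sum>i\<in>{1..n}. env_ST d d1 u V (ws ! i) \<omega>)))"

definition log_mgf :: "real measure \<Rightarrow> real \<Rightarrow> real" where
  "log_mgf \<mu> \<beta> = ln (\<integral>v. exp (\<beta> * v) \<partial>\<mu>)"

end

theory Submission
  imports Defs
begin

text \<open>First moment method. By independence, the expected contribution of a path is the product
  of the weights \<open>exp (\<beta> * u)\<close> at its nodes in the defect subtree and \<open>E exp (\<beta> * V)\<close> at the
  others. A path that has left the defect subtree never re-enters it, so going down one generation
  multiplies the total weight of the paths inside the defect subtree by \<open>d1 * exp (\<beta> * u)\<close>, while
  the paths ending outside it weigh at most \<open>d * E exp (\<beta> * V)\<close> times the total weight of the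
  previous generation. Hence \<open>E Z\<^sub>n \<le> (n + 1) * c ^ n\<close> with \<open>c\<close> the larger of the two factors, and
  Markov's inequality with Borel-Cantelli gives \<open>Z\<^sub>n < (c * exp \<epsilon>) ^ n\<close> eventually, almost surely,
  for every \<open>\<epsilon> > 0\<close>.\<close>

definition tree_child :: "nat \<Rightarrow> node \<Rightarrow> nat \<Rightarrow> node" where
  "tree_child d x l = (Suc (fst x), (snd x - 1) * d + l)"

lemma is_child_iff: "is_child d x y \<longleftrightarrow> (\<exists>l\<in>{1..d}. y = tree_child d x l)"
  by (auto simp: is_child_def tree_child_def)

lemma defect_subtree_snd_pos: "x \<in> defect_subtree d d1 \<Longrightarrow> 1 \<le> snd x"
  by (induction rule: defect_subtree.induct) (auto simp: root_def)

lemma mult_add_digit_inject: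
  fixes a b l l' d :: nat
  assumes "1 \<le> l" "l \<le> d" "1 \<le> l'" "l' \<le> d" "a * d + l = b * d + l'"
  shows "a = b \<and> l = l'"
proof -
  have eq: "a * d + (l - 1) = b * d + (l' - 1)" and "l - 1 < d" "l' - 1 < d"
    using assms by simp_all
  have "a = (a * d + (l - 1)) div d" using \<open>l - 1 < d\<close> by simp
  also have "\<dots> = b" unfolding eq using \<open>l' - 1 < d\<close> by simp
  finally show ?thesis using assms by simp
qed

lemma tree_child_in_defect_subtree_iff:
  assumes "1 \<le> j" "1 \<le> l" "l \<le> d" "d1 \<le> d"
  shows "tree_child d (k, j) l \<in> defect_subtree d d1 \<longleftrightarrow> (k, j) \<in> defect_subtree d d1 \<and> l \<le> d1"
proof
  assume "tree_child d (k, j) l \<in> defect_subtree d d1"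
  then obtain j' l' where j': "(k, j') \<in> defect_subtree d d1" "1 \<le> l'" "l' \<le> d1"
    and eq: "(j' - 1) * d + l' = (j - 1) * d + l"
    by (cases rule: defect_subtree.cases) (auto simp: tree_child_def root_def mult.commute)
  have "j' - 1 = j - 1 \<and> l' = l"
    using mult_add_digit_inject[OF _ _ _ _ eq] j' assms by auto
  moreover have "1 \<le> j'" using defect_subtree_snd_pos[OF j'(1)] by simp
  ultimately have "j' = j \<and> l' = l" using assms by linarith
  then show "(k, j) \<in> defect_subtree d d1 \<and> l \<le> d1" using j' assms by auto
next
  assume "(k, j) \<in> defect_subtree d d1 \<and> l \<le> d1"
  then show "tree_child d (k, j) l \<in> defect_subtree d d1"
    using defect_subtree.child_in[of k j d d1 l] assms by (simp add: tree_child_def mult.commute)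
qed

lemma paths_0: "paths d 0 = {[root]}"
  by (auto simp: paths_def length_Suc_conv)

lemma last_path:
  assumes "ws \<in> paths d n"
  shows "last ws = ws ! n"
proof -
  have "length ws = Suc n" using assms by (simp add: paths_def)
  moreover from this have "ws \<noteq> []" by auto
  ultimately show ?thesis by (simp add: last_conv_nth)
qed

lemma paths_Suc:
  "paths d (Suc n) = (\<lambda>(ws, l). ws @ [tree_child d (last ws) l]) ` (paths d n \<times> {1..d})"
proof (intro set_eqI iffI)
  fix ws' assume ws': "ws' \<in> paths d (Suc n)"
  then have len: "length ws' = Suc (Suc n)" by (simp add: paths_def)
  define ws where "ws = butlast ws'"
  have "ws' \<noteq> []" "butlast ws' \<noteq> []" using len by (auto simp: length_0_conv[symmetric])
  then have ws'_eq: "ws' = ws @ [last ws']" and last_ws: "last ws = ws' ! n"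
    by (simp_all add: ws_def) (use len in \<open>simp add: last_conv_nth nth_butlast\<close>)
  have "is_child d (ws' ! n) (last ws')" using ws' len \<open>ws' \<noteq> []\<close> by (simp add: paths_def last_conv_nth)
  then obtain l where "l \<in> {1..d}" "last ws' = tree_child d (last ws) l"
    by (auto simp: is_child_iff last_ws)
  moreover have "ws \<in> paths d n" using ws' len by (auto simp: paths_def ws_def nth_butlast)
  ultimately show "ws' \<in> (\<lambda>(ws, l). ws @ [tree_child d (last ws) l]) ` (paths d n \<times> {1..d})"
    using ws'_eq by (intro image_eqI[of _ _ "(ws, l)"]) auto
next
  fix ws' assume "ws' \<in> (\<lambda>(ws, l). ws @ [tree_child d (last ws) l]) ` (paths d n \<times> {1..d})"
  then obtain ws l where ws: "ws \<in> paths d n" and l: "l \<in> {1..d}"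
    and ws'_eq: "ws' = ws @ [tree_child d (last ws) l]" by auto
  have "length ws = Suc n" using ws by (simp add: paths_def)
  then show "ws' \<in> paths d (Suc n)"
    using ws l ws'_eq last_path[OF ws] by (auto simp: paths_def nth_append is_child_iff less_Suc_eq)
qed

lemma inj_on_paths_extend:
  "inj_on (\<lambda>(ws, l). ws @ [tree_child d (last ws) l]) (paths d n \<times> {1..d})"
  by (auto simp: inj_on_def tree_child_def)

lemma finite_paths: "finite (paths d n)"
  by (induction n) (auto simp: paths_0 paths_Suc)

lemma paths_nonempty: "1 \<le> d \<Longrightarrow> paths d n \<noteq> {}"
  by (induction n) (auto simp: paths_0 paths_Suc)

lemma sum_paths_Suc:
  "(\<Sum>ws\<in>paths d (Suc n). h ws) = (\<Sum>ws\<in>paths d n. \<Sum>l=1..d. h (ws @ [tree_child d (last ws) l]))"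
  unfolding paths_Suc
  by (subst sum.reindex[OF inj_on_paths_extend]) (simp add: sum.cartesian_product prod.case_distrib)

lemma path_nth_in_tree_nodes:
  assumes "ws \<in> paths d n" "i \<le> n"
  shows "ws ! i \<in> tree_nodes d \<and> fst (ws ! i) = i"
  using assms(2)
proof (induction i)
  case 0 then show ?case using assms(1) by (simp add: paths_def root_def tree_nodes_def)
next
  case (Suc i)
  then obtain j where j: "ws ! i = (i, j)" "1 \<le> j" "j \<le> d ^ i"
    by (cases "ws ! i") (auto simp: tree_nodes_def)
  have "is_child d (ws ! i) (ws ! Suc i)" using assms(1) Suc by (simp add: paths_def)
  then obtain l where l: "1 \<le> l" "l \<le> d" "ws ! Suc i = (Suc i, (j - 1) * d + l)"
    by (auto simp: is_child_iff tree_child_def j)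
  have "(j - 1) * d + l \<le> (d ^ i - 1) * d + d" using j l by (intro add_mono mult_right_mono) auto
  also have "\<dots> = d ^ Suc i" using j by (cases "d ^ i") (auto simp: algebra_simps)
  finally show ?case using l by (simp add: tree_nodes_def)
qed

definition path_weight :: "(node \<Rightarrow> real) \<Rightarrow> node list \<Rightarrow> real" where
  "path_weight g ws = prod_list (map g (tl ws))"

lemma path_weight_snoc: "ws \<noteq> [] \<Longrightarrow> path_weight g (ws @ [x]) = path_weight g ws * g x"
  by (cases ws) (auto simp: path_weight_def)

lemma path_weight_nonneg: "(\<And>x. 0 \<le> g x) \<Longrightarrow> 0 \<le> path_weight g ws"
  unfolding path_weight_def by (induction ws) (auto intro!: prod_list_nonneg)

lemma path_weight_eq_prod:
  assumes "length ws = Suc n"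
  shows "path_weight g ws = (\<Prod>i\<in>{1..n}. g (ws ! i))"
proof -
  have "path_weight g ws = (\<Prod>i<n. g (ws ! Suc i))"
    using assms by (simp add: path_weight_def prod.list_conv_set_nth nth_tl lessThan_atLeast0)
  also have "\<dots> = (\<Prod>i\<in>{1..n}. g (ws ! i))"
    by (simp add: prod.atLeast1_atMost_eq)
  finally show ?thesis .
qed

lemma sum_if_le_const:
  fixes c :: "'a :: semiring_1"
  assumes "d1 \<le> d"
  shows "(\<Sum>l=1..d. if l \<le> d1 then c else 0) = of_nat d1 * c"
proof -
  have "(\<Sum>l=1..d. if l \<le> d1 then c else 0) = (\<Sum>l=1..d1. c)"
    using assms by (intro sum.mono_neutral_cong_right) auto
  then show ?thesis by simp
qed

definition defect_weight :: "nat \<Rightarrow> nat \<Rightarrow> real \<Rightarrow> real \<Rightarrow> node \<Rightarrow> real" where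
  "defect_weight d d1 A B x = (if x \<in> defect_subtree d d1 then A else B)"

context
  fixes d d1 :: nat and A B :: real
  assumes d1_le: "d1 \<le> d" and nonneg: "0 \<le> A" "0 \<le> B"
begin

lemma path_defect_weight_nonneg: "0 \<le> path_weight (defect_weight d d1 A B) ws"
  using nonneg by (intro path_weight_nonneg) (simp add: defect_weight_def)

lemma sum_path_weight_defect_Suc:
  "(\<Sum>ws\<in>paths d (Suc n). if last ws \<in> defect_subtree d d1 then path_weight (defect_weight d d1 A B) ws else 0)
     = real d1 * A * (\<Sum>ws\<in>paths d n. if last ws \<in> defect_subtree d d1 then path_weight (defect_weight d d1 A B) ws else 0)"
  unfolding sum_paths_Suc sum_distrib_left
proof (intro sum.cong refl)
  let ?w = "path_weight (defect_weight d d1 A B)"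
  fix ws assume ws: "ws \<in> paths d n"
  then obtain j where last_ws: "last ws = (n, j)" "1 \<le> j"
    using path_nth_in_tree_nodes[OF ws order_refl] by (cases "ws ! n") (auto simp: last_path tree_nodes_def)
  have "ws \<noteq> []" using ws by (auto simp: paths_def)
  then have "(\<Sum>l=1..d. if last (ws @ [tree_child d (last ws) l]) \<in> defect_subtree d d1
                         then ?w (ws @ [tree_child d (last ws) l]) else 0)
      = (\<Sum>l=1..d. if l \<le> d1 then (if last ws \<in> defect_subtree d d1 then A * ?w ws else 0) else 0)"
    using last_ws d1_le
    by (intro sum.cong refl) (auto simp: path_weight_snoc tree_child_in_defect_subtree_iff defect_weight_def)
  also have "\<dots> = real d1 * A * (if last ws \<in> defect_subtree d d1 then ?w ws else 0)"
    using sum_if_le_const[OF d1_le, of "A * ?w ws"] by (simp add: mult.assoc)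
  finally show "(\<Sum>l=1..d. if last (ws @ [tree_child d (last ws) l]) \<in> defect_subtree d d1
                  then ?w (ws @ [tree_child d (last ws) l]) else 0)
      = real d1 * A * (if last ws \<in> defect_subtree d d1 then ?w ws else 0)" .
qed

lemma sum_path_weight_off_defect_Suc_le:
  "(\<Sum>ws\<in>paths d (Suc n). if last ws \<notin> defect_subtree d d1 then path_weight (defect_weight d d1 A B) ws else 0)
     \<le> real d * B * (\<Sum>ws\<in>paths d n. path_weight (defect_weight d d1 A B) ws)"
  unfolding sum_paths_Suc sum_distrib_left
proof (intro sum_mono)
  let ?w = "path_weight (defect_weight d d1 A B)"
  fix ws assume "ws \<in> paths d n"
  then have "ws \<noteq> []" by (auto simp: paths_def)
  then have "(\<Sum>l=1..d. if last (ws @ [tree_child d (last ws) l]) \<notin> defect_subtree d d1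
                   then ?w (ws @ [tree_child d (last ws) l]) else 0) \<le> (\<Sum>l=1..d. B * ?w ws)"
    using nonneg path_defect_weight_nonneg[of ws]
    by (intro sum_mono) (auto simp: path_weight_snoc defect_weight_def mult.commute)
  then show "(\<Sum>l=1..d. if last (ws @ [tree_child d (last ws) l]) \<notin> defect_subtree d d1
               then ?w (ws @ [tree_child d (last ws) l]) else 0) \<le> real d * B * ?w ws"
    by simp
qed

lemma sum_path_weight_le:
  assumes "real d1 * A \<le> C" "real d * B \<le> C"
  shows "(\<Sum>ws\<in>paths d n. path_weight (defect_weight d d1 A B) ws) \<le> (real n + 1) * C ^ n"
proof -
  let ?w = "path_weight (defect_weight d d1 A B)"
  let ?D = "\<lambda>n. \<Sum>ws\<in>paths d n. if last ws \<in> defect_subtree d d1 then ?w ws else 0"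
  let ?T = "\<lambda>n. \<Sum>ws\<in>paths d n. ?w ws"
  have split: "?T n = ?D n + (\<Sum>ws\<in>paths d n. if last ws \<notin> defect_subtree d d1 then ?w ws else 0)" for n
    by (simp add: sum.distrib[symmetric] if_distrib) (intro sum.cong; simp)
  have C_nonneg: "0 \<le> C"
    using assms(2) nonneg(2) by (metis mult_nonneg_nonneg of_nat_0_le_iff order_trans)
  have D_nonneg: "0 \<le> ?D n" for n
    using path_defect_weight_nonneg by (intro sum_nonneg) auto
  have "?D n \<le> C ^ n \<and> ?T n \<le> (real n + 1) * C ^ n"
  proof (induction n)
    case 0 then show ?case by (simp add: paths_0 path_weight_def defect_subtree.root_in)
  next
    case (Suc n)
    have D: "?D (Suc n) \<le> C ^ Suc n"
      unfolding sum_path_weight_defect_Suc using Suc.IH D_nonneg nonneg assms C_nonneg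
      by (simp add: mult_mono)
    have "?T (Suc n) \<le> C ^ Suc n + real d * B * ?T n"
      using split[of "Suc n"] D sum_path_weight_off_defect_Suc_le[of n] by linarith
    also have "\<dots> \<le> C ^ Suc n + C * ((real n + 1) * C ^ n)"
      using Suc.IH nonneg assms C_nonneg path_defect_weight_nonneg
      by (intro add_left_mono mult_mono) (auto intro!: sum_nonneg)
    also have "\<dots> = (real (Suc n) + 1) * C ^ Suc n" by (simp add: algebra_simps)
    finally show ?case using D by simp
  qed
  then show ?thesis by simp
qed

end

lemma (in prob_space) indep_identically_distributed_prod:
  fixes X :: "'i \<Rightarrow> 'a \<Rightarrow> real" and f :: "real \<Rightarrow> real"
  assumes indep: "indep_vars (\<lambda>_. borel) X I" and "finite J" "J \<subseteq> I"
    and law: "\<And>i. i \<in> I \<Longrightarrow> distr M borel (X i) = \<mu>"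
    and f: "integrable \<mu> f" "f \<in> borel_measurable borel"
  shows "integrable M (\<lambda>\<omega>. \<Prod>j\<in>J. f (X j \<omega>))"
    and "(\<integral>\<omega>. (\<Prod>j\<in>J. f (X j \<omega>)) \<partial>M) = (\<integral>v. f v \<partial>\<mu>) ^ card J"
proof -
  have indep_f: "indep_vars (\<lambda>_. borel) (\<lambda>j \<omega>. f (X j \<omega>)) J"
    using indep_vars_compose2[OF indep_vars_subset[OF indep \<open>J \<subseteq> I\<close>], of "\<lambda>_. f" "\<lambda>_. borel"] f(2)
    by simp
  have X_meas: "X j \<in> borel_measurable M" if "j \<in> I" for j
    using indep that by (auto simp: indep_vars_def)
  have int: "integrable M (\<lambda>\<omega>. f (X j \<omega>))" and eq: "(\<integral>\<omega>. f (X j \<omega>) \<partial>M) = (\<integral>v. f v \<partial>\<mu>)"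
    if "j \<in> J" for j
  proof -
    have "j \<in> I" using that \<open>J \<subseteq> I\<close> by blast
    then show "integrable M (\<lambda>\<omega>. f (X j \<omega>))" "(\<integral>\<omega>. f (X j \<omega>) \<partial>M) = (\<integral>v. f v \<partial>\<mu>)"
      using integrable_distr_eq[OF X_meas f(2)] integral_distr[OF X_meas f(2)] law f(1) by auto
  qed
  show "integrable M (\<lambda>\<omega>. \<Prod>j\<in>J. f (X j \<omega>))"
    using indep_vars_integrable[OF \<open>finite J\<close> indep_f] int by blast
  show "(\<integral>\<omega>. (\<Prod>j\<in>J. f (X j \<omega>)) \<partial>M) = (\<integral>v. f v \<partial>\<mu>) ^ card J"
    using indep_vars_lebesgue_integral[OF \<open>finite J\<close> indep_f] int eq by simp
qed

lemma summable_Suc_times_power: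
  fixes x :: real
  assumes "\<bar>x\<bar> < 1"
  shows "summable (\<lambda>n. (real n + 1) * x ^ n)"
  using termdiff_converges[of x 1 "\<lambda>_. 1"] assms summable_geometric
  by (simp add: diffs_def add.commute)

lemma (in prob_space) AE_eventually_less_power_of_integral_le:
  assumes int: "\<And>n. integrable M (Z n)" and pos: "\<And>n \<omega>. \<omega> \<in> space M \<Longrightarrow> 0 < Z n \<omega>"
    and bound: "\<And>n. (\<integral>\<omega>. Z n \<omega> \<partial>M) \<le> (real n + 1) * c ^ n"
    and "0 < c" "1 < q"
  shows "AE \<omega> in M. eventually (\<lambda>n. Z n \<omega> < (q * c) ^ n) sequentially"
proof -
  define A where "A n = {\<omega>\<in>space M. (q * c) ^ n \<le> Z n \<omega>}" for n
  have A_sets: "A n \<in> sets M" for n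
    unfolding A_def using borel_measurable_integrable[OF int] by measurable
  have measure_le: "measure M (A n) \<le> (real n + 1) * (1 / q) ^ n" for n
  proof -
    have "measure M (A n) \<le> (\<integral>\<omega>. Z n \<omega> \<partial>M) / (q * c) ^ n"
      unfolding A_def using pos \<open>0 < c\<close> \<open>1 < q\<close>
      by (intro integral_Markov_inequality_measure[OF int A_sets]) (auto intro: less_imp_le)
    also have "\<dots> \<le> (real n + 1) * c ^ n / (q * c) ^ n"
      using bound \<open>0 < c\<close> \<open>1 < q\<close> by (intro divide_right_mono) simp_all
    also have "\<dots> = (real n + 1) * (1 / q) ^ n"
      using \<open>0 < c\<close> by (simp add: power_mult_distrib power_one_over)
    finally show ?thesis .
  qed
  have "summable (\<lambda>n. (real n + 1) * (1 / q) ^ n)"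
    using \<open>1 < q\<close> by (intro summable_Suc_times_power) simp
  then have "summable (\<lambda>n. measure M (A n))"
    by (rule summable_comparison_test'[where N = 0]) (simp add: measure_le)
  then have "AE \<omega> in M. eventually (\<lambda>n. \<omega> \<in> space M - A n) sequentially"
    by (intro borel_cantelli_AE1 A_sets) (auto simp: emeasure_eq_measure)
  then show ?thesis
    by (rule AE_mp) (auto intro!: AE_I2 elim!: eventually_mono simp: A_def not_le)
qed

lemma (in prob_space) AE_limsup_ln_div_le_of_integral_le:
  assumes int: "\<And>n. integrable M (Z n)" and pos: "\<And>n \<omega>. \<omega> \<in> space M \<Longrightarrow> 0 < Z n \<omega>"
    and bound: "\<And>n. (\<integral>\<omega>. Z n \<omega> \<partial>M) \<le> (real n + 1) * c ^ n"
    and "0 < c"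
  shows "AE \<omega> in M. limsup (\<lambda>n. ereal (ln (Z n \<omega>) / real n)) \<le> ereal (ln c)"
proof -
  have "AE \<omega> in M. \<forall>m. eventually (\<lambda>n. Z n \<omega> < (exp (1 / Suc m) * c) ^ n) sequentially"
    unfolding AE_all_countable
    by (intro allI AE_eventually_less_power_of_integral_le[OF int pos bound \<open>0 < c\<close>])
      (auto intro: one_less_exp_iff[THEN iffD2])
  then show ?thesis
  proof (rule AE_mp, intro AE_I2 impI)
    fix \<omega> assume \<omega>: "\<omega> \<in> space M"
      and less: "\<forall>m. eventually (\<lambda>n. Z n \<omega> < (exp (1 / Suc m) * c) ^ n) sequentially"
    have limsup_le: "limsup (\<lambda>n. ereal (ln (Z n \<omega>) / real n)) \<le> ereal (ln c + 1 / Suc m)" for m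
    proof (rule Limsup_bounded)
      show "eventually (\<lambda>n. ereal (ln (Z n \<omega>) / real n) \<le> ereal (ln c + 1 / Suc m)) sequentially"
        using spec[OF less, of m] eventually_ge_at_top[of 1]
      proof eventually_elim
        case (elim n)
        have "ln (Z n \<omega>) < ln ((exp (1 / Suc m) * c) ^ n)"
          using elim pos[OF \<omega>] \<open>0 < c\<close> by (intro ln_less_cancel_iff[THEN iffD2]) simp_all
        also have "\<dots> = real n * (ln c + 1 / Suc m)"
          using \<open>0 < c\<close> by (simp add: ln_realpow ln_mult)
        finally show ?case using elim by (simp add: divide_le_eq mult.commute)
      qed
    qed
    show "limsup (\<lambda>n. ereal (ln (Z n \<omega>) / real n)) \<le> ereal (ln c)"
    proof (rule ereal_le_epsilon2)
      fix e :: real assume "0 < e"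
      then obtain m :: nat where "1 / Suc m < e"
        by (metis reals_Archimedean of_nat_Suc inverse_eq_divide)
      then have "ereal (ln c + 1 / Suc m) \<le> ereal (ln c) + ereal e" by simp
      with limsup_le[of m] show "limsup (\<lambda>n. ereal (ln (Z n \<omega>) / real n)) \<le> ereal (ln c) + ereal e"
        by (rule order_trans)
    qed
  qed
qed

lemma Z_ST_pos: "1 \<le> d \<Longrightarrow> 0 < Z_ST d d1 V n \<beta> u \<omega>"
  unfolding Z_ST_def using paths_nonempty finite_paths by (intro sum_pos) auto

lemma prod_path_split:
  assumes "ws \<in> paths d n"
  shows "(\<Prod>i\<in>{1..n}. h (ws ! i))
           = (\<Prod>x\<in>(!) ws ` {1..n} \<inter> D. h x) * (\<Prod>x\<in>(!) ws ` {1..n} - D. h x)"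
proof -
  have "inj_on ((!) ws) {1..n}"
    using path_nth_in_tree_nodes[OF assms] by (intro inj_onI) (metis atLeastAtMost_iff)
  then have "(\<Prod>i\<in>{1..n}. h (ws ! i)) = (\<Prod>x\<in>(!) ws ` {1..n}. h x)"
    by (simp add: prod.reindex)
  also have "\<dots> = (\<Prod>x\<in>(!) ws ` {1..n} \<inter> D. h x) * (\<Prod>x\<in>(!) ws ` {1..n} - D. h x)"
    by (rule prod.Int_Diff) simp
  finally show ?thesis .
qed

lemma integral_exp_path_energy:
  fixes M :: "'a measure" and \<mu> :: "real measure" and V :: "node \<Rightarrow> 'a \<Rightarrow> real"
    and d d1 n :: nat and \<beta> u :: real and ws :: "node list"
  assumes "prob_space M"
    and law: "\<And>x. x \<in> tree_nodes d - defect_subtree d d1 \<Longrightarrow> distr M borel (V x) = \<mu>"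
    and indep: "prob_space.indep_vars M (\<lambda>_. borel) V (tree_nodes d - defect_subtree d d1)"
    and mgf: "integrable \<mu> (\<lambda>v. exp (\<beta> * v))"
    and ws: "ws \<in> paths d n"
  defines "F \<equiv> \<lambda>\<omega>. exp (\<beta> * (\<Sum>i\<in>{1..n}. env_ST d d1 u V (ws ! i) \<omega>))"
  shows "integrable M F"
    and "(\<integral>\<omega>. F \<omega> \<partial>M) = path_weight (defect_weight d d1 (exp (\<beta> * u)) (\<integral>v. exp (\<beta> * v) \<partial>\<mu>)) ws"
proof -
  interpret prob_space M by fact
  let ?N = "(!) ws ` {1..n}" and ?D = "defect_subtree d d1"
    and ?g = "defect_weight d d1 (exp (\<beta> * u)) (\<integral>v. exp (\<beta> * v) \<partial>\<mu>)"
  have N_sub: "?N - ?D \<subseteq> tree_nodes d - ?D"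
    using path_nth_in_tree_nodes[OF ws] by auto
  have F_eq: "F \<omega> = exp (\<beta> * u) ^ card (?N \<inter> ?D) * (\<Prod>x\<in>?N - ?D. exp (\<beta> * V x \<omega>))" for \<omega>
  proof -
    have "F \<omega> = (\<Prod>i\<in>{1..n}. exp (\<beta> * env_ST d d1 u V (ws ! i) \<omega>))"
      by (simp add: F_def sum_distrib_left exp_sum)
    also have "\<dots> = (\<Prod>x\<in>?N \<inter> ?D. exp (\<beta> * env_ST d d1 u V x \<omega>))
                    * (\<Prod>x\<in>?N - ?D. exp (\<beta> * env_ST d d1 u V x \<omega>))"
      by (rule prod_path_split[OF ws])
    also have "\<dots> = (\<Prod>x\<in>?N \<inter> ?D. exp (\<beta> * u)) * (\<Prod>x\<in>?N - ?D. exp (\<beta> * V x \<omega>))"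
      by (intro arg_cong2[where f = "(*)"] prod.cong) (auto simp: env_ST_def)
    finally show ?thesis by simp
  qed
  have weight_eq:
    "path_weight ?g ws = exp (\<beta> * u) ^ card (?N \<inter> ?D) * (\<integral>v. exp (\<beta> * v) \<partial>\<mu>) ^ card (?N - ?D)"
  proof -
    have "path_weight ?g ws = (\<Prod>i\<in>{1..n}. ?g (ws ! i))"
      using ws by (intro path_weight_eq_prod) (simp add: paths_def)
    also have "\<dots> = (\<Prod>x\<in>?N \<inter> ?D. ?g x) * (\<Prod>x\<in>?N - ?D. ?g x)"
      by (rule prod_path_split[OF ws])
    also have "\<dots> = (\<Prod>x\<in>?N \<inter> ?D. exp (\<beta> * u)) * (\<Prod>x\<in>?N - ?D. \<integral>v. exp (\<beta> * v) \<partial>\<mu>)"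
      by (intro arg_cong2[where f = "(*)"] prod.cong) (auto simp: defect_weight_def)
    finally show ?thesis by simp
  qed
  have "finite (?N - ?D)" "(\<lambda>v. exp (\<beta> * v)) \<in> borel_measurable borel" by auto
  note prod_law = indep_identically_distributed_prod[OF indep this(1) N_sub law mgf this(2)]
  show "integrable M F"
    unfolding F_eq by (intro integrable_mult_right) (use prod_law in simp)
  show "(\<integral>\<omega>. F \<omega> \<partial>M) = path_weight ?g ws"
    unfolding F_eq weight_eq using prod_law by simp
qed

lemma integral_Z_ST_le:
  fixes M :: "'a measure" and \<mu> :: "real measure" and V :: "node \<Rightarrow> 'a \<Rightarrow> real"
  assumes "prob_space M" "d1 \<le> d"
    and law: "\<And>x. x \<in> tree_nodes d - defect_subtree d d1 \<Longrightarrow> distr M borel (V x) = \<mu>"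
    and indep: "prob_space.indep_vars M (\<lambda>_. borel) V (tree_nodes d - defect_subtree d d1)"
    and mgf: "integrable \<mu> (\<lambda>v. exp (\<beta> * v))"
  shows "integrable M (Z_ST d d1 V n \<beta> u)"
    and "(\<integral>\<omega>. Z_ST d d1 V n \<beta> u \<omega> \<partial>M)
           \<le> (real n + 1) * max (real d * (\<integral>v. exp (\<beta> * v) \<partial>\<mu>)) (real d1 * exp (\<beta> * u)) ^ n"
proof -
  let ?E = "\<integral>v. exp (\<beta> * v) \<partial>\<mu>"
  let ?g = "defect_weight d d1 (exp (\<beta> * u)) ?E"
  note path = integral_exp_path_energy[OF assms(1) law indep mgf]
  have Z_eq: "Z_ST d d1 V n \<beta> u
      = (\<lambda>\<omega>. \<Sum>ws\<in>paths d n. exp (\<beta> * (\<Sum>i\<in>{1..n}. env_ST d d1 u V (ws ! i) \<omega>)))"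
    by (simp add: Z_ST_def fun_eq_iff)
  show "integrable M (Z_ST d d1 V n \<beta> u)"
    unfolding Z_eq using path(1) by (intro Bochner_Integration.integrable_sum) blast
  have "(\<integral>\<omega>. Z_ST d d1 V n \<beta> u \<omega> \<partial>M) = (\<Sum>ws\<in>paths d n. path_weight ?g ws)"
    unfolding Z_eq using path by (subst Bochner_Integration.integral_sum) auto
  also have "\<dots> \<le> (real n + 1) * max (real d * ?E) (real d1 * exp (\<beta> * u)) ^ n"
    using \<open>d1 \<le> d\<close> by (intro sum_path_weight_le) (auto intro: integral_nonneg)
  finally show "(\<integral>\<omega>. Z_ST d d1 V n \<beta> u \<omega> \<partial>M)
      \<le> (real n + 1) * max (real d * ?E) (real d1 * exp (\<beta> * u)) ^ n" .
qed

lemma integral_exp_pos: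
  fixes f :: "'a \<Rightarrow> real"
  assumes "prob_space M" "integrable M (\<lambda>x. exp (f x))"
  shows "0 < (\<integral>x. exp (f x) \<partial>M)"
proof -
  interpret prob_space M by fact
  have "(\<integral>x. exp (f x) \<partial>M) \<noteq> 0"
  proof
    assume "(\<integral>x. exp (f x) \<partial>M) = 0"
    then have "AE x in M. False"
      using integral_nonneg_eq_0_iff_AE[OF assms(2)] by simp
    then show False by simp
  qed
  then show ?thesis by (simp add: integral_nonneg less_le)
qed

lemma ln_max: "0 < x \<Longrightarrow> 0 < y \<Longrightarrow> ln (max x y) = max (ln x) (ln (y :: real))"
  by (auto simp: max_def)

theorem proposition2p7:
  fixes M :: "'a measure" and \<mu> :: "real measure"
    and V :: "node \<Rightarrow> 'a \<Rightarrow> real"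
    and d d1 :: nat and \<beta> u :: real
  assumes "prob_space M"
    and "d \<ge> 2" and "1 \<le> d1" and "d1 < d"
    and law: "\<And>x. x \<in> tree_nodes d - defect_subtree d d1 \<Longrightarrow>
               V x \<in> borel_measurable M \<and> distr M borel (V x) = \<mu>"
    and indep: "prob_space.indep_vars M (\<lambda>_. borel) V (tree_nodes d - defect_subtree d d1)"
    and mgf_finite: "\<And>b. integrable \<mu> (\<lambda>v. exp (b * v))"
    and nondeg: "\<not> (\<exists>c. AE v in \<mu>. v = c)"
    and "\<beta> > 0"
  shows "AE \<omega> in M.
           limsup (\<lambda>n. ereal (ln (Z_ST d d1 V n \<beta> u \<omega>) / real n))
             \<le> ereal (max (log_mgf \<mu> \<beta> + ln (real d)) (\<beta> * u + ln (real d1)))"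
proof -
  interpret prob_space M by fact
  let ?E = "\<integral>v. exp (\<beta> * v) \<partial>\<mu>"
  have off_defect: "(1, d) \<in> tree_nodes d - defect_subtree d d1"
    using tree_child_in_defect_subtree_iff[of 1 d d d1 0] assms by (simp add: tree_child_def tree_nodes_def)
  then have "prob_space \<mu>"
    using law prob_space_distr by metis
  then have "0 < ?E"
    using integral_exp_pos mgf_finite by blast
  let ?c = "max (real d * ?E) (real d1 * exp (\<beta> * u))"
  have ln_c: "ln ?c = max (log_mgf \<mu> \<beta> + ln (real d)) (\<beta> * u + ln (real d1))"
    using \<open>0 < ?E\<close> assms by (simp add: ln_max ln_mult log_mgf_def add.commute)
  have "integrable M (Z_ST d d1 V n \<beta> u)"
    and "(\<integral>\<omega>. Z_ST d d1 V n \<beta> u \<omega> \<partial>M) \<le> (real n + 1) * ?c ^ n" for n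
    using integral_Z_ST_le[OF \<open>prob_space M\<close> _ _ indep mgf_finite] assms law by auto
  moreover have "0 < ?c" using \<open>0 < ?E\<close> assms by (simp add: less_max_iff_disj)
  ultimately show ?thesis
    unfolding ln_c[symmetric] using Z_ST_pos[of d] \<open>d \<ge> 2\<close>
    by (intro AE_limsup_ln_div_le_of_integral_le) auto
qed

end
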